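(* Suppose Assumptions 1–4 hold, and suppose that there is $\theta_0=(\beta_0,\gamma_0)\in\mathrm{int}(\Theta^c)$ such that, almost surely, $\mu(X)=X'\beta_0$ and $\sigma(X)^2=s(X'\gamma_0)^2$. Then $\theta_0$ is the unique minimizer of $Q(\theta)$ over $\Theta$.
   Context: Let $Y$ be a scalar random variable and $X$ a random $k\times1$ vector whose first component equals $1$; let $\mathcal{X}$ denote the support of $X$. Write $\mu(X)=E[Y\mid X]$ and $\sigma(X)^2=E[(Y-\mu(X))^2\mid X]$. Let $s$ be a positive scale function, write $s_j(t)=\partial^j s(t)/\partial t^j$ for $j=1,2,3$, and set $\Theta_\gamma=\{\gamma\in\mathbb{R}^k:\Pr[s(X'\gamma)>0]=1\}$ and $\Theta=\mathbb{R}^k\times\Theta_\gamma$. For $\theta=(\beta,\gamma)\in\Theta$ put $e(Y,X,\theta)=(Y-X'\beta)/s(X'\gamma)$ and $Q(\theta)=E\big[\tfrac12\{e(Y,X,\theta)^2+1\}s(X'\gamma)\big]$. Let $\Theta^c=\{\theta\in\Theta:\|\theta\|\le C_\theta,\ \inf_{x\in\mathcal{X}}s(x'\gamma)\ge C_s\}$ for a finite constant $C_\theta$ and a constant $C_s>0$, and let $\mathrm{int}(\Theta^c)$ denote its interior. Assumption 1: for $a=0$ or $a=-\infty$, $s:(a,\infty)\to(0,\infty)$ is three times differentiable, strictly increasing and convex, with $\lim_{t\to a}s(t)=0$ and $\lim_{t\to\infty}s(t)=\infty$. Assumption 2: $x\mapsto\sigma(x)^2$ is bounded away from $0$ uniformly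 on $\mathcal{X}$. Assumption 3: (i) $E[Y^4]<\infty$ and $E\|X\|^4<\infty$; (ii) for all $\gamma\in\Theta_\gamma$, $E[\|X\|^4s_2(X'\gamma)^2]<\infty$, $E[\|X\|^6s_3(X'\gamma)^2]<\infty$ and $E[\|X\|^6s_1(X'\gamma)^2s_2(X'\gamma)^2]<\infty$. Assumption 4: for all $\gamma\in\Theta_\gamma$, $E[XX'/s(X'\gamma)]$ is nonsingular. *)

theory Defs
  imports "HOL-Probability.Probability"
begin

definition sdom :: "ereal \<Rightarrow> real set" where
  "sdom a = {t. a < ereal t}"

definition scale_assm :: "ereal \<Rightarrow> (real \<Rightarrow> real) \<Rightarrow> (real \<Rightarrow> real) \<Rightarrow> (real \<Rightarrow> real) \<Rightarrow> (real \<Rightarrow> real) \<Rightarrow> bool" where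
  "scale_assm a s s1 s2 s3 \<longleftrightarrow>
     (a = 0 \<or> a = -\<infinity>) \<and>
     (\<forall>t\<in>sdom a. 0 < s t) \<and>
     (\<forall>t\<in>sdom a. (s has_real_derivative s1 t) (at t) \<and>
                  (s1 has_real_derivative s2 t) (at t) \<and>
                  (s2 has_real_derivative s3 t) (at t)) \<and>
     strict_mono_on (sdom a) s \<and> convex_on (sdom a) s \<and>
     (s \<longlongrightarrow> 0) (if a = -\<infinity> then at_bot else at_right 0) \<and>
     filterlim s at_top at_top"

definition support_rv :: "'w measure \<Rightarrow> ('w \<Rightarrow> 'b::metric_space) \<Rightarrow> 'b set" where
  "support_rv M X = {x. \<forall>e>0. 0 < measure M (X -` ball x e \<inter> space M)}"

definition Theta_gamma :: "'w measure \<Rightarrow> ('w \<Rightarrow> real^'k) \<Rightarrow> ereal \<Rightarrow> (real \<Rightarrow> real) \<Rightarrow> (real^'k) set" where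
  "Theta_gamma M X a s =
     {g. measure M {w \<in> space M. a < ereal (X w \<bullet> g) \<and> 0 < s (X w \<bullet> g)} = 1}"

definition Theta :: "'w measure \<Rightarrow> ('w \<Rightarrow> real^'k) \<Rightarrow> ereal \<Rightarrow> (real \<Rightarrow> real) \<Rightarrow> ((real^'k) \<times> (real^'k)) set" where
  "Theta M X a s = UNIV \<times> Theta_gamma M X a s"

definition resid :: "(real \<Rightarrow> real) \<Rightarrow> real \<Rightarrow> real^'k \<Rightarrow> (real^'k) \<times> (real^'k) \<Rightarrow> real" where
  "resid s y x \<theta> = (y - x \<bullet> fst \<theta>) / s (x \<bullet> snd \<theta>)"

definition Qobj :: "'w measure \<Rightarrow> ('w \<Rightarrow> real) \<Rightarrow> ('w \<Rightarrow> real^'k) \<Rightarrow> (real \<Rightarrow> real) \<Rightarrow> (real^'k) \<times> (real^'k) \<Rightarrow> ennreal" where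
  "Qobj M Y X s \<theta> =
     (\<integral>\<^sup>+ w. ennreal (1/2 * ((resid s (Y w) (X w) \<theta>)\<^sup>2 + 1) * s (X w \<bullet> snd \<theta>)) \<partial>M)"

definition Theta_c :: "'w measure \<Rightarrow> ('w \<Rightarrow> real^'k) \<Rightarrow> ereal \<Rightarrow> (real \<Rightarrow> real) \<Rightarrow> real \<Rightarrow> real \<Rightarrow> ((real^'k) \<times> (real^'k)) set" where
  "Theta_c M X a s C\<theta> Cs =
     {\<theta> \<in> Theta M X a s. norm \<theta> \<le> C\<theta> \<and>
        (\<forall>x\<in>support_rv M X. a < ereal (x \<bullet> snd \<theta>) \<and> Cs \<le> s (x \<bullet> snd \<theta>))}"

definition sigX :: "'w measure \<Rightarrow> ('w \<Rightarrow> 'b::topological_space) \<Rightarrow> 'w measure" where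
  "sigX M X = vimage_algebra (space M) X borel"

end

theory Submission
  imports Defs
begin

(*
  Conditioning on X, the conditional mean and variance assumptions give
  E[(Y - X'\<beta>)^2 | X] = s0^2 + d^2 with s0 = s(X'\<gamma>0) and d = X'(\<beta>0 - \<beta>), so with S = s(X'\<gamma>)
  the objective becomes Q(\<beta>,\<gamma>) = E[((s0^2 + d^2)/S + S)/2]. Pointwise
  ((s0^2 + d^2)/S + S)/2 = s0 + ((S - s0)^2 + d^2)/(2S) \<ge> s0, and E[s0] = Q(\<beta>0,\<gamma>0) is finite.
  Hence Q(\<beta>,\<gamma>) \<le> Q(\<beta>0,\<gamma>0) forces S = s0 and X'(\<beta>0 - \<beta>) = 0 almost surely. Since
  E[XX'/s(X'\<gamma>0)] is invertible, a.s. vanishing of X'v forces v = 0; this gives \<beta> = \<beta>0 and, via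
  strict monotonicity of s, \<gamma> = \<gamma>0.
*)

lemma integrable_mult_of_squares:
  fixes f g :: "'a \<Rightarrow> real"
  assumes [measurable]: "f \<in> borel_measurable M" "g \<in> borel_measurable M"
    and "integrable M (\<lambda>x. (f x)\<^sup>2)" "integrable M (\<lambda>x. (g x)\<^sup>2)"
  shows "integrable M (\<lambda>x. f x * g x)"
proof (rule Bochner_Integration.integrable_bound)
  show "integrable M (\<lambda>x. (f x)\<^sup>2 + (g x)\<^sup>2)"
    using assms(3,4) by simp
  show "AE x in M. norm (f x * g x) \<le> norm ((f x)\<^sup>2 + (g x)\<^sup>2)"
  proof (rule AE_I2)
    fix x
    have "2 * (\<bar>f x\<bar> * \<bar>g x\<bar>) \<le> (f x)\<^sup>2 + (g x)\<^sup>2"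
      using sum_squares_bound[of "\<bar>f x\<bar>" "\<bar>g x\<bar>"] by (simp add: mult.assoc)
    moreover have "0 \<le> \<bar>f x\<bar> * \<bar>g x\<bar>"
      by simp
    ultimately show "norm (f x * g x) \<le> norm ((f x)\<^sup>2 + (g x)\<^sup>2)"
      unfolding real_norm_def abs_mult by (simp only: abs_of_nonneg[OF sum_power2_ge_zero])
  qed
qed measurable

lemma integrable_square_add:
  fixes f g :: "'a \<Rightarrow> real"
  assumes [measurable]: "f \<in> borel_measurable M" "g \<in> borel_measurable M"
    and "integrable M (\<lambda>x. (f x)\<^sup>2)" "integrable M (\<lambda>x. (g x)\<^sup>2)"
  shows "integrable M (\<lambda>x. (f x + g x)\<^sup>2)"
proof -
  have "integrable M (\<lambda>x. (f x)\<^sup>2 + (g x)\<^sup>2 + 2 * (f x * g x))"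
    using assms integrable_mult_of_squares[OF assms] by auto
  then show ?thesis
    by (simp add: power2_sum algebra_simps)
qed

lemma (in finite_measure) integrable_square_of_power4:
  fixes f :: "'a \<Rightarrow> real"
  assumes "f \<in> borel_measurable M" "integrable M (\<lambda>x. (f x)^4)"
  shows "integrable M (\<lambda>x. (f x)\<^sup>2)"
  by (rule square_integrable_imp_integrable) (use assms in \<open>simp_all flip: power_mult\<close>)

lemma scale_loss_eq:
  fixes S S0 d :: real
  assumes "0 < S"
  shows "((S0\<^sup>2 + d\<^sup>2) / S + S) / 2 = S0 + ((S - S0)\<^sup>2 + d\<^sup>2) / (2 * S)"
  using assms by (simp add: field_simps power2_eq_square)

lemma AE_eq_0_if_nn_integral_add_le:
  fixes g r :: "'a \<Rightarrow> real"
  assumes [measurable]: "g \<in> borel_measurable M" "r \<in> borel_measurable M"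
    and nonneg: "AE x in M. 0 \<le> g x" "AE x in M. 0 \<le> r x"
    and fin: "(\<integral>\<^sup>+x. ennreal (g x) \<partial>M) \<noteq> \<infinity>"
    and le: "(\<integral>\<^sup>+x. ennreal (g x + r x) \<partial>M) \<le> (\<integral>\<^sup>+x. ennreal (g x) \<partial>M)"
  shows "AE x in M. r x = 0"
proof -
  have "(\<integral>\<^sup>+x. ennreal (g x + r x) \<partial>M) = (\<integral>\<^sup>+x. ennreal (g x) + ennreal (r x) \<partial>M)"
    by (rule nn_integral_cong_AE) (use nonneg in \<open>eventually_elim, simp\<close>)
  also have "\<dots> = (\<integral>\<^sup>+x. ennreal (g x) \<partial>M) + (\<integral>\<^sup>+x. ennreal (r x) \<partial>M)"
    by (rule nn_integral_add) measurable
  finally have "(\<integral>\<^sup>+x. ennreal (g x) \<partial>M) + (\<integral>\<^sup>+x. ennreal (r x) \<partial>M) \<le> (\<integral>\<^sup>+x. ennreal (g x) \<partial>M) + 0"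
    using le by simp
  then have "(\<integral>\<^sup>+x. ennreal (r x) \<partial>M) \<le> 0"
    using fin ennreal_add_left_cancel_le by blast
  then have "AE x in M. ennreal (r x) = 0"
    by (simp add: nn_integral_0_iff_AE)
  then show ?thesis
    using nonneg(2) by eventually_elim (simp add: ennreal_eq_0_iff)
qed

lemma eq_0_if_AE_inner_eq_0:
  fixes X :: "'w \<Rightarrow> real^'k" and f :: "'w \<Rightarrow> real"
  assumes int: "\<And>i j. integrable M (\<lambda>w. X w $ i * X w $ j / f w)"
    and inv: "invertible (\<chi> i j. integral\<^sup>L M (\<lambda>w. X w $ i * X w $ j / f w))"
    and ae: "AE w in M. X w \<bullet> v = 0"
  shows "v = 0"
proof -
  let ?G = "\<chi> i j. integral\<^sup>L M (\<lambda>w. X w $ i * X w $ j / f w)"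
  have "(?G *v v) $ i = 0" for i
  proof -
    have "(?G *v v) $ i = (\<Sum>j\<in>UNIV. integral\<^sup>L M (\<lambda>w. X w $ i * X w $ j / f w) * v $ j)"
      by (simp add: matrix_vector_mult_def)
    also have "\<dots> = (\<Sum>j\<in>UNIV. integral\<^sup>L M (\<lambda>w. X w $ i * X w $ j / f w * v $ j))"
      by (simp only: integral_mult_left_zero)
    also have "\<dots> = integral\<^sup>L M (\<lambda>w. \<Sum>j\<in>UNIV. X w $ i * X w $ j / f w * v $ j)"
      by (rule Bochner_Integration.integral_sum[symmetric]) (use int in \<open>simp del: times_divide_eq_left\<close>)
    also have "\<dots> = integral\<^sup>L M (\<lambda>w. 0)"
    proof (rule integral_cong_AE)
      show "(\<lambda>w. \<Sum>j\<in>UNIV. X w $ i * X w $ j / f w * v $ j) \<in> borel_measurable M"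
        using int by (intro borel_measurable_sum borel_measurable_times borel_measurable_const) auto
      show "AE w in M. (\<Sum>j\<in>UNIV. X w $ i * X w $ j / f w * v $ j) = 0"
        using ae
      proof eventually_elim
        case (elim w)
        have "(\<Sum>j\<in>UNIV. X w $ i * X w $ j / f w * v $ j) = X w $ i / f w * (X w \<bullet> v)"
          by (simp add: inner_vec_def sum_distrib_left mult_ac)
        then show ?case
          using elim by simp
      qed
    qed simp
    finally show ?thesis by simp
  qed
  then have "?G *v v = 0"
    by (simp add: vec_eq_iff)
  moreover obtain H where "H ** ?G = mat 1"
    using inv unfolding invertible_def by blast
  then have "v = H *v (?G *v v)"
    by (simp add: matrix_vector_mul_assoc)
  ultimately show "v = 0"
    by simp
qed

context sigma_finite_subalgebra
begin

lemma nn_cond_exp_eq_real_cond_exp: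
  assumes "integrable M f" "\<And>x. 0 \<le> f x"
  shows "AE x in M. nn_cond_exp M F (\<lambda>x. ennreal (f x)) x = ennreal (real_cond_exp M F f x)"
proof -
  have [measurable]: "f \<in> borel_measurable M"
    using assms(1) by auto
  have "(\<integral>\<^sup>+ x. 1 * nn_cond_exp M F (\<lambda>x. ennreal (f x)) x \<partial>M) = (\<integral>\<^sup>+ x. 1 * ennreal (f x) \<partial>M)"
    by (rule nn_cond_exp_intg) auto
  also have "\<dots> < \<infinity>"
    using assms by (simp add: integrable_iff_bounded)
  finally have finite: "AE x in M. nn_cond_exp M F (\<lambda>x. ennreal (f x)) x \<noteq> \<infinity>"
    by (intro nn_integral_PInf_AE) auto
  have neg_part: "(\<lambda>x. ennreal (- f x)) = (\<lambda>x. 0)"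
    using assms(2) by (simp add: ennreal_neg)
  have "AE x in M. 0 = nn_cond_exp M F (\<lambda>x. 0) x"
    by (rule nn_cond_exp_F_meas) auto
  with finite show ?thesis
    unfolding real_cond_exp_def neg_part by eventually_elim (auto simp: ennreal_enn2real_if)
qed

lemma nn_integral_mult_real_cond_exp:
  assumes f: "integrable M f" "\<And>x. 0 \<le> f x"
    and h[measurable]: "h \<in> borel_measurable F" and "\<And>x. 0 \<le> h x"
  shows "(\<integral>\<^sup>+ x. ennreal (h x * f x) \<partial>M) = (\<integral>\<^sup>+ x. ennreal (h x * real_cond_exp M F f x) \<partial>M)"
proof -
  have [measurable]: "f \<in> borel_measurable M"
    using f by auto
  have "(\<integral>\<^sup>+ x. ennreal (h x * f x) \<partial>M) = (\<integral>\<^sup>+ x. ennreal (h x) * ennreal (f x) \<partial>M)"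
    using assms by (simp add: ennreal_mult)
  also have "\<dots> = (\<integral>\<^sup>+ x. ennreal (h x) * nn_cond_exp M F (\<lambda>x. ennreal (f x)) x \<partial>M)"
    by (rule nn_cond_exp_intg[symmetric]) auto
  also have "\<dots> = (\<integral>\<^sup>+ x. ennreal (h x * real_cond_exp M F f x) \<partial>M)"
  proof (rule nn_integral_cong_AE)
    have "AE x in M. 0 \<le> real_cond_exp M F f x"
      using f by (intro real_cond_exp_pos) auto
    then show "AE x in M. ennreal (h x) * nn_cond_exp M F (\<lambda>x. ennreal (f x)) x = ennreal (h x * real_cond_exp M F f x)"
      using nn_cond_exp_eq_real_cond_exp[OF f] by eventually_elim (simp add: assms ennreal_mult)
  qed
  finally show ?thesis .
qed

lemma real_cond_exp_square_add:
  assumes U: "integrable M U" "integrable M (\<lambda>x. (U x)\<^sup>2)"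
    and U_mean: "AE x in M. real_cond_exp M F U x = 0"
    and d[measurable]: "d \<in> borel_measurable F" and d_sq: "integrable M (\<lambda>x. (d x)\<^sup>2)"
  shows "AE x in M. real_cond_exp M F (\<lambda>x. (U x + d x)\<^sup>2) x = real_cond_exp M F (\<lambda>x. (U x)\<^sup>2) x + (d x)\<^sup>2"
proof -
  have [measurable]: "U \<in> borel_measurable M" "d \<in> borel_measurable M"
    using U(1) measurable_from_subalg[OF subalg d] by auto
  have dU: "integrable M (\<lambda>x. d x * U x)"
    by (rule integrable_mult_of_squares) (use U d_sq in auto)
  have sq: "(\<lambda>x. (U x + d x)\<^sup>2) = (\<lambda>x. (U x)\<^sup>2 + (2 * (d x * U x) + (d x)\<^sup>2))"
    by (simp add: power2_sum algebra_simps)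
  have "AE x in M. real_cond_exp M F (\<lambda>x. (U x)\<^sup>2 + (2 * (d x * U x) + (d x)\<^sup>2)) x
      = real_cond_exp M F (\<lambda>x. (U x)\<^sup>2) x + real_cond_exp M F (\<lambda>x. 2 * (d x * U x) + (d x)\<^sup>2) x"
    by (rule real_cond_exp_add) (use U dU d_sq in auto)
  moreover have "AE x in M. real_cond_exp M F (\<lambda>x. 2 * (d x * U x) + (d x)\<^sup>2) x
      = real_cond_exp M F (\<lambda>x. 2 * (d x * U x)) x + real_cond_exp M F (\<lambda>x. (d x)\<^sup>2) x"
    by (rule real_cond_exp_add) (use dU d_sq in auto)
  moreover have "AE x in M. real_cond_exp M F (\<lambda>x. 2 * (d x * U x)) x = 2 * real_cond_exp M F (\<lambda>x. d x * U x) x"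
    by (rule real_cond_exp_cmult[OF dU])
  moreover have "AE x in M. real_cond_exp M F (\<lambda>x. d x * U x) x = d x * real_cond_exp M F U x"
    by (rule real_cond_exp_mult) (use dU in auto)
  moreover have "AE x in M. real_cond_exp M F (\<lambda>x. (d x)\<^sup>2) x = (d x)\<^sup>2"
    by (rule real_cond_exp_F_meas[OF d_sq]) measurable
  ultimately show ?thesis
    unfolding sq using U_mean by eventually_elim simp
qed

lemma nn_integral_scale_loss_cond:
  assumes U: "integrable M U" "integrable M (\<lambda>x. (U x)\<^sup>2)"
    and U_mean: "AE x in M. real_cond_exp M F U x = 0"
    and U_var: "AE x in M. real_cond_exp M F (\<lambda>x. (U x)\<^sup>2) x = v x" and [measurable]: "v \<in> borel_measurable M"
    and d[measurable]: "d \<in> borel_measurable F" and d_sq: "integrable M (\<lambda>x. (d x)\<^sup>2)"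
    and S[measurable]: "S \<in> borel_measurable F" and S_pos: "\<And>x. 0 < S x"
  shows "(\<integral>\<^sup>+ x. ennreal (((U x + d x)\<^sup>2 / S x + S x) / 2) \<partial>M)
       = (\<integral>\<^sup>+ x. ennreal (((v x + (d x)\<^sup>2) / S x + S x) / 2) \<partial>M)"
proof -
  have [measurable]: "U \<in> borel_measurable M" "d \<in> borel_measurable M" "S \<in> borel_measurable M"
    using U(1) measurable_from_subalg[OF subalg d] measurable_from_subalg[OF subalg S] by auto
  let ?h = "\<lambda>x. 1 / (2 * S x)"
  have h_F: "?h \<in> borel_measurable F"
    by measurable
  have loss: "((r / S x + S x) / 2) = ?h x * r + S x / 2" for r x
    using S_pos[of x] by (simp add: field_simps)
  have split: "(\<integral>\<^sup>+ x. ennreal (((r x) / S x + S x) / 2) \<partial>M)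
      = (\<integral>\<^sup>+ x. ennreal (?h x * r x) \<partial>M) + (\<integral>\<^sup>+ x. ennreal (S x / 2) \<partial>M)"
    if [measurable]: "r \<in> borel_measurable M" and "AE x in M. 0 \<le> r x" for r
  proof -
    have "(\<integral>\<^sup>+ x. ennreal (((r x) / S x + S x) / 2) \<partial>M) = (\<integral>\<^sup>+ x. ennreal (?h x * r x) + ennreal (S x / 2) \<partial>M)"
      by (rule nn_integral_cong_AE) (use that(2) in \<open>eventually_elim, simp add: loss S_pos less_imp_le\<close>)
    also have "\<dots> = (\<integral>\<^sup>+ x. ennreal (?h x * r x) \<partial>M) + (\<integral>\<^sup>+ x. ennreal (S x / 2) \<partial>M)"
      by (rule nn_integral_add) measurable
    finally show ?thesis .
  qed
  have "AE x in M. 0 \<le> real_cond_exp M F (\<lambda>x. (U x)\<^sup>2) x"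
    by (rule real_cond_exp_pos) auto
  then have v_nonneg: "AE x in M. 0 \<le> v x"
    using U_var by eventually_elim simp
  have "(\<integral>\<^sup>+ x. ennreal (?h x * (U x + d x)\<^sup>2) \<partial>M)
      = (\<integral>\<^sup>+ x. ennreal (?h x * real_cond_exp M F (\<lambda>x. (U x + d x)\<^sup>2) x) \<partial>M)"
    by (rule nn_integral_mult_real_cond_exp[OF integrable_square_add _ h_F])
       (use U d_sq S_pos in \<open>auto intro: less_imp_le\<close>)
  also have "\<dots> = (\<integral>\<^sup>+ x. ennreal (?h x * (v x + (d x)\<^sup>2)) \<partial>M)"
    by (rule nn_integral_cong_AE) (use real_cond_exp_square_add[OF U U_mean d d_sq] U_var in \<open>eventually_elim, simp\<close>)
  moreover have "AE x in M. 0 \<le> v x + (d x)\<^sup>2"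
    using v_nonneg by eventually_elim simp
  ultimately show ?thesis
    by (simp add: split)
qed

end

lemma open_sdom: "open (sdom a)"
proof (cases a)
  case (real r)
  then have "sdom a = {r<..}"
    by (auto simp: sdom_def)
  then show ?thesis
    by simp
qed (simp_all add: sdom_def)

lemma sigma_finite_subalgebra_sigX:
  assumes "prob_space M" "X \<in> borel_measurable M"
  shows "sigma_finite_subalgebra M (sigX M X)"
proof (rule finite_measure_subalgebra_is_sigma_finite)
  have "subalgebra M (sigX M X)"
    unfolding sigX_def subalgebra_def using sets_image_in_sets[of M "space M" X borel] assms(2) by auto
  then show "finite_measure_subalgebra M (sigX M X)"
    using prob_space.finite_measure[OF assms(1)]
    by (simp add: finite_measure_subalgebra_def finite_measure_subalgebra_axioms_def)
qed

lemma measurable_sigX: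
  "h \<in> borel_measurable borel \<Longrightarrow> (\<lambda>w. h (X w)) \<in> borel_measurable (sigX M X)"
  unfolding sigX_def by (rule measurable_compose[OF measurable_vimage_algebra1]) auto

lemma AE_Theta_gamma:
  assumes "prob_space M" "g \<in> Theta_gamma M X a s"
  shows "AE w in M. X w \<bullet> g \<in> sdom a \<and> 0 < s (X w \<bullet> g)"
proof -
  let ?A = "{w \<in> space M. a < ereal (X w \<bullet> g) \<and> 0 < s (X w \<bullet> g)}"
  have "measure M ?A = 1"
    using assms(2) unfolding Theta_gamma_def by simp
  moreover from this have "?A \<in> sets M"
    using measure_notin_sets[of ?A M] by fastforce
  ultimately have "AE w in M. w \<in> ?A"
    using prob_space.prob_eq_1[OF assms(1)] by blast
  then show ?thesis
    unfolding sdom_def by eventually_elim auto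
qed

locale correct_location_scale_model = prob_space M
  for M :: "'w measure" and Y :: "'w \<Rightarrow> real" and X :: "'w \<Rightarrow> real^'k"
    and a :: ereal and s :: "real \<Rightarrow> real" and mu sigma2 :: "real^'k \<Rightarrow> real"
    and \<beta>0 \<gamma>0 :: "real^'k" +
  assumes Y_meas[measurable]: "Y \<in> borel_measurable M"
    and X_meas[measurable]: "X \<in> borel_measurable M"
    and mu_meas[measurable]: "mu \<in> borel_measurable borel"
    and mu_cond_exp: "AE w in M. mu (X w) = real_cond_exp M (sigX M X) Y w"
    and sigma2_cond_exp: "AE w in M. sigma2 (X w) = real_cond_exp M (sigX M X) (\<lambda>v. (Y v - mu (X v))\<^sup>2) w"
    and s_pos: "\<And>t. t \<in> sdom a \<Longrightarrow> 0 < s t"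
    and s_cont: "continuous_on (sdom a) s"
    and s_strict_mono: "strict_mono_on (sdom a) s"
    and Y_sq: "integrable M (\<lambda>w. (Y w)\<^sup>2)"
    and X_sq: "integrable M (\<lambda>w. (norm (X w))\<^sup>2)"
    and Gram_integrable: "\<And>i j. integrable M (\<lambda>w. X w $ i * X w $ j / s (X w \<bullet> \<gamma>0))"
    and Gram_invertible: "invertible (\<chi> i j. integral\<^sup>L M (\<lambda>w. X w $ i * X w $ j / s (X w \<bullet> \<gamma>0)))"
    and \<gamma>0_Theta: "\<gamma>0 \<in> Theta_gamma M X a s"
    and mean_correct: "AE w in M. mu (X w) = X w \<bullet> \<beta>0"
    and var_correct: "AE w in M. sigma2 (X w) = (s (X w \<bullet> \<gamma>0))\<^sup>2"
begin

sublocale cond: sigma_finite_subalgebra M "sigX M X"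
  by (rule sigma_finite_subalgebra_sigX[OF prob_space_axioms X_meas])

text \<open>s(X'\<gamma>), set to 1 outside the domain of s so that it is measurable and positive everywhere.\<close>
definition scale :: "real^'k \<Rightarrow> 'w \<Rightarrow> real" where
  "scale \<gamma> w = (if X w \<bullet> \<gamma> \<in> sdom a then s (X w \<bullet> \<gamma>) else 1)"

definition error :: "'w \<Rightarrow> real" where
  "error w = Y w - X w \<bullet> \<beta>0"

lemma scale_pos: "0 < scale \<gamma> w"
  by (simp add: scale_def s_pos)

lemma measurable_scale_sigX: "scale \<gamma> \<in> borel_measurable (sigX M X)"
proof -
  have "(\<lambda>t. if t \<in> sdom a then s t else 1) \<in> borel_measurable borel"
    using open_sdom s_cont by (intro borel_measurable_continuous_on_if) auto
  from measurable_sigX[OF measurable_compose[OF _ this], of "\<lambda>x. x \<bullet> \<gamma>"]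
  show ?thesis
    unfolding scale_def by simp
qed

lemma measurable_scale[measurable]: "scale \<gamma> \<in> borel_measurable M"
  by (rule measurable_from_subalg[OF cond.subalg measurable_scale_sigX])

lemma AE_scale_eq:
  assumes "\<gamma> \<in> Theta_gamma M X a s"
  shows "AE w in M. X w \<bullet> \<gamma> \<in> sdom a \<and> scale \<gamma> w = s (X w \<bullet> \<gamma>)"
  using AE_Theta_gamma[OF prob_space_axioms assms] by eventually_elim (simp add: scale_def)

lemma integrable_inner_sq: "integrable M (\<lambda>w. (X w \<bullet> v)\<^sup>2)"
proof (rule Bochner_Integration.integrable_bound)
  show "integrable M (\<lambda>w. (norm (X w))\<^sup>2 * (norm v)\<^sup>2)"
    using X_sq by simp
  show "AE w in M. norm ((X w \<bullet> v)\<^sup>2) \<le> norm ((norm (X w))\<^sup>2 * (norm v)\<^sup>2)"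
  proof (rule AE_I2)
    fix w
    have "\<bar>X w \<bullet> v\<bar>\<^sup>2 \<le> (norm (X w) * norm v)\<^sup>2"
      by (rule power_mono[OF Cauchy_Schwarz_ineq2 abs_ge_zero])
    then show "norm ((X w \<bullet> v)\<^sup>2) \<le> norm ((norm (X w))\<^sup>2 * (norm v)\<^sup>2)"
      by (simp add: power_mult_distrib)
  qed
qed measurable

lemma integrable_error_sq: "integrable M (\<lambda>w. (error w)\<^sup>2)"
  unfolding error_def using integrable_square_add[of Y M "\<lambda>w. X w \<bullet> (- \<beta>0)"] Y_sq integrable_inner_sq
  by simp

lemma integrable_error: "integrable M error"
  by (rule square_integrable_imp_integrable[OF _ integrable_error_sq]) (simp add: error_def)

lemma cond_exp_error: "AE w in M. real_cond_exp M (sigX M X) error w = 0"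
proof -
  have "integrable M (\<lambda>w. X w \<bullet> \<beta>0)"
    by (rule square_integrable_imp_integrable[OF _ integrable_inner_sq]) simp
  then have "AE w in M. real_cond_exp M (sigX M X) error w
      = real_cond_exp M (sigX M X) Y w - real_cond_exp M (sigX M X) (\<lambda>w. X w \<bullet> \<beta>0) w"
       "AE w in M. real_cond_exp M (sigX M X) (\<lambda>w. X w \<bullet> \<beta>0) w = X w \<bullet> \<beta>0"
    using square_integrable_imp_integrable[OF Y_meas Y_sq] measurable_sigX[of "\<lambda>x. x \<bullet> \<beta>0"]
    unfolding error_def by auto
  then show ?thesis
    using mu_cond_exp mean_correct by eventually_elim simp
qed

lemma cond_exp_error_sq: "AE w in M. real_cond_exp M (sigX M X) (\<lambda>w. (error w)\<^sup>2) w = (scale \<gamma>0 w)\<^sup>2"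
proof -
  have "AE w in M. (error w)\<^sup>2 = (Y w - mu (X w))\<^sup>2"
    using mean_correct by eventually_elim (simp add: error_def)
  then have "AE w in M. real_cond_exp M (sigX M X) (\<lambda>w. (error w)\<^sup>2) w
      = real_cond_exp M (sigX M X) (\<lambda>v. (Y v - mu (X v))\<^sup>2) w"
    by (rule cond.real_cond_exp_cong) (simp_all add: error_def)
  then show ?thesis
    using sigma2_cond_exp var_correct AE_scale_eq[OF \<gamma>0_Theta] by eventually_elim simp
qed

lemma Qobj_eq_scale_loss:
  assumes "\<gamma> \<in> Theta_gamma M X a s"
  shows "Qobj M Y X s (\<beta>, \<gamma>)
    = (\<integral>\<^sup>+ w. ennreal ((((scale \<gamma>0 w)\<^sup>2 + (X w \<bullet> (\<beta>0 - \<beta>))\<^sup>2) / scale \<gamma> w + scale \<gamma> w) / 2) \<partial>M)"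
    (is "_ = ?rhs")
proof -
  have "Qobj M Y X s (\<beta>, \<gamma>)
      = (\<integral>\<^sup>+ w. ennreal (((error w + X w \<bullet> (\<beta>0 - \<beta>))\<^sup>2 / scale \<gamma> w + scale \<gamma> w) / 2) \<partial>M)"
    unfolding Qobj_def
  proof (rule nn_integral_cong_AE)
    show "AE w in M. ennreal (1 / 2 * ((resid s (Y w) (X w) (\<beta>, \<gamma>))\<^sup>2 + 1) * s (X w \<bullet> snd (\<beta>, \<gamma>)))
        = ennreal (((error w + X w \<bullet> (\<beta>0 - \<beta>))\<^sup>2 / scale \<gamma> w + scale \<gamma> w) / 2)"
      using AE_scale_eq[OF assms]
    proof eventually_elim
      case (elim w)
      have r: "Y w - X w \<bullet> \<beta> = error w + X w \<bullet> (\<beta>0 - \<beta>)"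
        by (simp add: error_def inner_diff_right)
      have "1 / 2 * ((t / S)\<^sup>2 + 1) * S = (t\<^sup>2 / S + S) / 2" if "0 < S" for t S :: real
        using that by (simp add: field_simps power2_eq_square)
      then show ?case
        unfolding resid_def fst_conv snd_conv r using elim scale_pos[of \<gamma> w] by simp
    qed
  qed
  also have "\<dots> = ?rhs"
    by (rule cond.nn_integral_scale_loss_cond[OF integrable_error integrable_error_sq cond_exp_error
          cond_exp_error_sq _ measurable_sigX integrable_inner_sq measurable_scale_sigX scale_pos]) auto
  finally show ?thesis .
qed

lemma Qobj_true: "Qobj M Y X s (\<beta>0, \<gamma>0) = (\<integral>\<^sup>+ w. ennreal (scale \<gamma>0 w) \<partial>M)"
  unfolding Qobj_eq_scale_loss[OF \<gamma>0_Theta]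
  by (rule nn_integral_cong) (use scale_pos[of \<gamma>0] in \<open>simp add: field_simps power2_eq_square\<close>)

lemma integrable_scale_true: "integrable M (scale \<gamma>0)"
proof (rule square_integrable_imp_integrable)
  show "integrable M (\<lambda>w. (scale \<gamma>0 w)\<^sup>2)"
    by (rule integrable_cong_AE_imp[OF cond.real_cond_exp_int(1)[OF integrable_error_sq]])
      (measurable, rule cond_exp_error_sq)
qed measurable

lemma Qobj_true_finite: "Qobj M Y X s (\<beta>0, \<gamma>0) \<noteq> \<infinity>"
  unfolding Qobj_true using nn_integral_eq_integral[OF integrable_scale_true] scale_pos[THEN less_imp_le]
  by simp

lemma Qobj_le_true_imp_true:
  assumes \<gamma>: "\<gamma> \<in> Theta_gamma M X a s" and le: "Qobj M Y X s (\<beta>, \<gamma>) \<le> Qobj M Y X s (\<beta>0, \<gamma>0)"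
  shows "\<beta> = \<beta>0 \<and> \<gamma> = \<gamma>0"
proof -
  define r where "r w = ((scale \<gamma> w - scale \<gamma>0 w)\<^sup>2 + (X w \<bullet> (\<beta>0 - \<beta>))\<^sup>2) / (2 * scale \<gamma> w)" for w
  have "(\<integral>\<^sup>+ w. ennreal (scale \<gamma>0 w + r w) \<partial>M) \<le> (\<integral>\<^sup>+ w. ennreal (scale \<gamma>0 w) \<partial>M)"
    using le scale_loss_eq[OF scale_pos] unfolding Qobj_eq_scale_loss[OF \<gamma>] Qobj_true r_def by simp
  moreover have "0 \<le> r w" for w
    using scale_pos[of \<gamma> w] by (simp add: r_def)
  ultimately have "AE w in M. r w = 0"
    using Qobj_true_finite scale_pos[of \<gamma>0] unfolding Qobj_true
    by (intro AE_eq_0_if_nn_integral_add_le) (auto simp: r_def intro: less_imp_le)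
  then have ae: "AE w in M. scale \<gamma> w = scale \<gamma>0 w \<and> X w \<bullet> (\<beta>0 - \<beta>) = 0"
  proof (rule eventually_mono)
    fix w
    assume "r w = 0"
    then have "(scale \<gamma> w - scale \<gamma>0 w)\<^sup>2 + (X w \<bullet> (\<beta>0 - \<beta>))\<^sup>2 = 0"
      using scale_pos[of \<gamma> w] by (simp add: r_def)
    then show "scale \<gamma> w = scale \<gamma>0 w \<and> X w \<bullet> (\<beta>0 - \<beta>) = 0"
      by simp
  qed
  have "\<beta>0 - \<beta> = 0"
    by (rule eq_0_if_AE_inner_eq_0[OF Gram_integrable Gram_invertible]) (use ae in eventually_elim, simp)
  moreover have "\<gamma> - \<gamma>0 = 0"
    by (rule eq_0_if_AE_inner_eq_0[OF Gram_integrable Gram_invertible])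
      (use ae AE_scale_eq[OF \<gamma>] AE_scale_eq[OF \<gamma>0_Theta] in
        \<open>eventually_elim, auto dest: strict_mono_on_eqD[OF s_strict_mono] simp: inner_diff_right\<close>)
  ultimately show ?thesis
    by simp
qed

theorem unique_minimizer:
  "\<forall>\<theta>\<in>Theta M X a s. \<theta> \<noteq> (\<beta>0, \<gamma>0) \<longrightarrow> Qobj M Y X s (\<beta>0, \<gamma>0) < Qobj M Y X s \<theta>"
  using Qobj_le_true_imp_true by (force simp: Theta_def not_less)

end

theorem theorem1:
  fixes M :: "'w measure"
    and Y :: "'w \<Rightarrow> real"
    and X :: "'w \<Rightarrow> real^'k"
    and i1 :: 'k
    and a :: ereal and s s1 s2 s3 :: "real \<Rightarrow> real"
    and mu sigma2 :: "real^'k \<Rightarrow> real"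
    and C\<theta> Cs :: real
    and \<beta>0 \<gamma>0 :: "real^'k"
  assumes prob: "prob_space M"
    and Y_meas: "Y \<in> borel_measurable M"
    and X_meas: "X \<in> borel_measurable M"
    and X_first: "\<forall>w\<in>space M. X w $ i1 = 1"
    and mu_meas: "mu \<in> borel_measurable borel"
    and sigma2_meas: "sigma2 \<in> borel_measurable borel"
    and mu_def: "AE w in M. mu (X w) = real_cond_exp M (sigX M X) Y w"
    and sigma2_def: "AE w in M. sigma2 (X w) =
                       real_cond_exp M (sigX M X) (\<lambda>v. (Y v - mu (X v))\<^sup>2) w"
    and A1: "scale_assm a s s1 s2 s3"
    and A2: "\<exists>c>0. \<forall>x\<in>support_rv M X. c \<le> sigma2 x"
    and A3i: "integrable M (\<lambda>w. (Y w)^4)" "integrable M (\<lambda>w. (norm (X w))^4)"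
    and A3ii: "\<forall>g\<in>Theta_gamma M X a s.
                 integrable M (\<lambda>w. (norm (X w))^4 * (s2 (X w \<bullet> g))\<^sup>2) \<and>
                 integrable M (\<lambda>w. (norm (X w))^6 * (s3 (X w \<bullet> g))\<^sup>2) \<and>
                 integrable M (\<lambda>w. (norm (X w))^6 * (s1 (X w \<bullet> g))\<^sup>2 * (s2 (X w \<bullet> g))\<^sup>2)"
    and A4: "\<forall>g\<in>Theta_gamma M X a s.
               (\<forall>i j. integrable M (\<lambda>w. X w $ i * X w $ j / s (X w \<bullet> g))) \<and>
               invertible (\<chi> i j. integral\<^sup>L M (\<lambda>w. X w $ i * X w $ j / s (X w \<bullet> g)))"
    and \<theta>0_int: "(\<beta>0, \<gamma>0) \<in> interior (Theta_c M X a s C\<theta> Cs)"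
    and Cs_pos: "0 < Cs"
    and mean_correct: "AE w in M. mu (X w) = X w \<bullet> \<beta>0"
    and var_correct: "AE w in M. sigma2 (X w) = (s (X w \<bullet> \<gamma>0))\<^sup>2"
  shows "(\<beta>0, \<gamma>0) \<in> Theta M X a s \<and>
         (\<forall>\<theta>\<in>Theta M X a s. \<theta> \<noteq> (\<beta>0, \<gamma>0) \<longrightarrow> Qobj M Y X s (\<beta>0, \<gamma>0) < Qobj M Y X s \<theta>)"
  \<comment> \<open>X_first, A2, A3ii and Cs_pos serve the asymptotic theory only; identification does not use them.\<close>
proof -
  have s: "\<And>t. t \<in> sdom a \<Longrightarrow> 0 < s t" "strict_mono_on (sdom a) s"
    and s_deriv: "\<And>t. t \<in> sdom a \<Longrightarrow> (s has_real_derivative s1 t) (at t)"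
    using A1 unfolding scale_assm_def by blast+
  have "continuous_on (sdom a) s"
    using s_deriv by (intro continuous_at_imp_continuous_on) (auto intro: DERIV_isCont)
  moreover have \<theta>0_Theta: "(\<beta>0, \<gamma>0) \<in> Theta M X a s"
    using interior_subset \<theta>0_int unfolding Theta_c_def by blast
  then have "\<gamma>0 \<in> Theta_gamma M X a s"
    by (simp add: Theta_def)
  moreover have "integrable M (\<lambda>w. (Y w)\<^sup>2)" "integrable M (\<lambda>w. (norm (X w))\<^sup>2)"
    using A3i by (auto intro!: finite_measure.integrable_square_of_power4[OF prob_space.finite_measure[OF prob]]
        measurable_compose[OF X_meas borel_measurable_norm] simp: Y_meas)
  ultimately interpret correct_location_scale_model M Y X a s mu sigma2 \<beta>0 \<gamma>0
    using prob Y_meas X_meas mu_meas mu_def sigma2_def s A4 mean_correct var_correct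
    by (intro correct_location_scale_model.intro correct_location_scale_model_axioms.intro) simp_all
  show ?thesis
    using \<theta>0_Theta unique_minimizer by blast
qed

end
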